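(* A tree $T$ is strong cop-win if and only if $T$ is a caterpillar.
   Context: A caterpillar is a tree such that removing all its leaves leaves a path (possibly empty or a single vertex). All graphs are finite and reflexive (a player may stay in place). The game of $k$ cops and $m$ robbers on $G$: in round 0 the cops first choose starting vertices, then the robbers choose theirs. In each round $i\geq 1$, all cops move (each to an adjacent vertex or staying), then all robbers move likewise. Several players may occupy the same vertex. Whenever a cop and some robbers occupy the same vertex, those robbers are captured and take no further part in the game. Both sides have full information. The cops win if all robbers are captured after finitely many rounds. For a cop-win graph $G$, $\mathrm{capt}(G,m)$ is the index of the round in which the last robber is captured when one cop plays to minimize this index and $m$ robbers play to maximize it. $G$ is strong cop-win if $\lim_{m\to\infty}\mathrm{capt}(G,m)$ exists (and is finite). *)

theory Defs
  imports Complex_Main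
begin

text \<open>A graph is given by a vertex set V and an adjacency relation E (only its
restriction to V matters). Moves are reflexive: a player may stay put.\<close>

definition is_simple_graph :: "'a set \<Rightarrow> ('a \<Rightarrow> 'a \<Rightarrow> bool) \<Rightarrow> bool" where
  "is_simple_graph V E \<longleftrightarrow> finite V \<and> (\<forall>u v. E u v \<longrightarrow> u \<in> V \<and> v \<in> V)
     \<and> (\<forall>u v. E u v \<longrightarrow> E v u) \<and> (\<forall>v. \<not> E v v)"

definition connected_graph :: "'a set \<Rightarrow> ('a \<Rightarrow> 'a \<Rightarrow> bool) \<Rightarrow> bool" where
  "connected_graph V E \<longleftrightarrow>
     (\<forall>u\<in>V. \<forall>v\<in>V. (\<lambda>x y. E x y \<and> x \<in> V \<and> y \<in> V)\<^sup>*\<^sup>* u v)"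

definition is_cycle :: "'a set \<Rightarrow> ('a \<Rightarrow> 'a \<Rightarrow> bool) \<Rightarrow> 'a list \<Rightarrow> bool" where
  "is_cycle V E xs \<longleftrightarrow> length xs \<ge> 3 \<and> distinct xs \<and> set xs \<subseteq> V
     \<and> (\<forall>i. Suc i < length xs \<longrightarrow> E (xs ! i) (xs ! Suc i))
     \<and> E (last xs) (hd xs)"

definition is_tree :: "'a set \<Rightarrow> ('a \<Rightarrow> 'a \<Rightarrow> bool) \<Rightarrow> bool" where
  "is_tree V E \<longleftrightarrow> is_simple_graph V E \<and> V \<noteq> {} \<and> connected_graph V E
     \<and> (\<nexists>xs. is_cycle V E xs)"

definition leaves :: "'a set \<Rightarrow> ('a \<Rightarrow> 'a \<Rightarrow> bool) \<Rightarrow> 'a set" where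
  "leaves V E = {v \<in> V. card {u \<in> V. E v u} = 1}"

definition induced_is_path :: "'a set \<Rightarrow> ('a \<Rightarrow> 'a \<Rightarrow> bool) \<Rightarrow> bool" where
  "induced_is_path W E \<longleftrightarrow> W = {} \<or>
     (\<exists>xs. distinct xs \<and> set xs = W \<and>
        (\<forall>u\<in>W. \<forall>v\<in>W. E u v \<longleftrightarrow>
           (\<exists>i. Suc i < length xs \<and> ((xs ! i = u \<and> xs ! Suc i = v) \<or> (xs ! i = v \<and> xs ! Suc i = u)))))"

definition caterpillar :: "'a set \<Rightarrow> ('a \<Rightarrow> 'a \<Rightarrow> bool) \<Rightarrow> bool" where
  "caterpillar V E \<longleftrightarrow> is_tree V E \<and> induced_is_path (V - leaves V E) E"

definition cnbhd :: "'a set \<Rightarrow> ('a \<Rightarrow> 'a \<Rightarrow> bool) \<Rightarrow> 'a \<Rightarrow> 'a set" where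
  "cnbhd V E v = {u \<in> V. u = v \<or> E v u}"

text \<open>Game of one cop against the robbers still in the game (list of their positions).
  cop_wins_within V E n c rs: it is the cop's turn, the cop is at c, the
  uncaptured robbers are at positions rs; the cop can guarantee that all robbers are
  captured within the next n rounds.\<close>
fun cop_wins_within :: "'a set \<Rightarrow> ('a \<Rightarrow> 'a \<Rightarrow> bool) \<Rightarrow> nat \<Rightarrow> 'a \<Rightarrow> 'a list \<Rightarrow> bool" where
  "cop_wins_within V E 0 c rs \<longleftrightarrow> rs = []"
| "cop_wins_within V E (Suc n) c rs \<longleftrightarrow> rs = [] \<or>
     (\<exists>c' \<in> cnbhd V E c.
        let rs1 = filter (\<lambda>r. r \<noteq> c') rs in
        rs1 = [] \<or>
        (\<forall>rs'. list_all2 (\<lambda>r r'. r' \<in> cnbhd V E r) rs1 rs' \<longrightarrow>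
            cop_wins_within V E n c' (filter (\<lambda>r. r \<noteq> c') rs')))"

text \<open>Round 0: cop places, then the m robbers place (those on the cop are captured).
  The cop can guarantee that the last robber is captured by round n.\<close>
definition cop_captures_by :: "'a set \<Rightarrow> ('a \<Rightarrow> 'a \<Rightarrow> bool) \<Rightarrow> nat \<Rightarrow> nat \<Rightarrow> bool" where
  "cop_captures_by V E m n \<longleftrightarrow>
     (\<exists>c0\<in>V. \<forall>rs0. length rs0 = m \<and> set rs0 \<subseteq> V \<longrightarrow>
        cop_wins_within V E n c0 (filter (\<lambda>r. r \<noteq> c0) rs0))"

definition cop_win :: "'a set \<Rightarrow> ('a \<Rightarrow> 'a \<Rightarrow> bool) \<Rightarrow> bool" where
  "cop_win V E \<longleftrightarrow> (\<exists>n. cop_captures_by V E 1 n)"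

text \<open>capt(G,m): value of the game (cop minimises, robbers maximise the capture round).\<close>
definition capt :: "'a set \<Rightarrow> ('a \<Rightarrow> 'a \<Rightarrow> bool) \<Rightarrow> nat \<Rightarrow> nat" where
  "capt V E m = (LEAST n. cop_captures_by V E m n)"

definition strong_cop_win :: "'a set \<Rightarrow> ('a \<Rightarrow> 'a \<Rightarrow> bool) \<Rightarrow> bool" where
  "strong_cop_win V E \<longleftrightarrow> cop_win V E \<and> (\<forall>m. \<exists>n. cop_captures_by V E m n)
     \<and> (\<exists>L::nat. (\<lambda>m. capt V E m) \<longlonglongrightarrow> L)"

end

(*
  A caterpillar has a spine: a path P such that every vertex off P is a leaf. A single cop
  walks along P; at each spine vertex he first visits every leaf hanging there and comes
  back, so the robbers stay confined to the part of the tree ahead of him, and all of them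
  are caught within |P| (2 |V| + 1) rounds, however many robbers there are.

  A tree that is not a caterpillar contains a spider: a centre c with three neighbours a,
  each having a further neighbour b a. With one robber on every lazy walk of a given length,
  the robbers act as a territory which, each round, spreads to its closed neighbourhood
  minus the cop. Such a territory never dies out: either two legs a, b a in branches not
  containing the cop are fully occupied, or the cop is inside a branch while the centre and
  enough of the other legs are occupied. Hence capt(T, m) is unbounded in m.

  As capt(G, m) is non-decreasing in m, it converges if and only if it is bounded.
*)
theory Submission
  imports Defs "HOL-Library.Transitive_Closure_Table"
begin

section \<open>Robber territories\<close>

(* A territory S stands for a robber on every vertex of S; robber_spread V E c S is the
   territory after the cop has moved to c and the surviving robbers have replied. *)
definition robber_spread :: "'a set \<Rightarrow> ('a \<Rightarrow> 'a \<Rightarrow> bool) \<Rightarrow> 'a \<Rightarrow> 'a set \<Rightarrow> 'a set" where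
  "robber_spread V E c S = (\<Union>x\<in>S - {c}. cnbhd V E x) - {c}"

lemma robber_spread_mono: "S \<subseteq> T \<Longrightarrow> robber_spread V E c S \<subseteq> robber_spread V E c T"
  unfolding robber_spread_def by blast

lemma robber_spreadI: "s \<in> S \<Longrightarrow> t \<in> cnbhd V E s \<Longrightarrow> s \<noteq> c \<Longrightarrow> t \<noteq> c \<Longrightarrow> t \<in> robber_spread V E c S"
  unfolding robber_spread_def by blast

lemma robber_spread_insert_self: "robber_spread V E c (insert c S) = robber_spread V E c S"
  unfolding robber_spread_def by simp

lemma robber_spread_stay: "s \<in> S \<Longrightarrow> s \<in> V \<Longrightarrow> s \<noteq> c \<Longrightarrow> s \<in> robber_spread V E c S"
  unfolding robber_spread_def cnbhd_def by blast

lemma robber_spread_move: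
  "s \<in> S \<Longrightarrow> E s t \<Longrightarrow> t \<in> V \<Longrightarrow> s \<noteq> c \<Longrightarrow> t \<noteq> c \<Longrightarrow> t \<in> robber_spread V E c S"
  unfolding robber_spread_def cnbhd_def by blast

lemma robber_spread_subset: "robber_spread V E c S \<subseteq> V"
  unfolding robber_spread_def cnbhd_def by blast

inductive cop_clears :: "'a set \<Rightarrow> ('a \<Rightarrow> 'a \<Rightarrow> bool) \<Rightarrow> nat \<Rightarrow> 'a \<Rightarrow> 'a set \<Rightarrow> bool"
  for V E where
  cop_clears_empty: "cop_clears V E n c {}"
| cop_clears_step: "c' \<in> cnbhd V E c \<Longrightarrow> cop_clears V E n c' (robber_spread V E c' S)
    \<Longrightarrow> cop_clears V E (Suc n) c S"

lemma cop_wins_within_Nil: "cop_wins_within V E n c []"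
  by (cases n) auto

lemma cop_clears_imp_cop_wins_within:
  "cop_clears V E n c S \<Longrightarrow> set rs \<subseteq> S \<Longrightarrow> cop_wins_within V E n c rs"
proof (induction arbitrary: rs rule: cop_clears.induct)
  case (cop_clears_empty n c)
  then show ?case by (simp add: cop_wins_within_Nil)
next
  case (cop_clears_step c' c n S)
  have "cop_wins_within V E n c' (filter (\<lambda>r. r \<noteq> c') rs')"
    if moves: "list_all2 (\<lambda>r r'. r' \<in> cnbhd V E r) (filter (\<lambda>r. r \<noteq> c') rs) rs'" for rs'
  proof (rule cop_clears_step.IH, rule subsetI)
    fix y assume "y \<in> set (filter (\<lambda>r. r \<noteq> c') rs')"
    then obtain i where i: "i < length rs'" "rs' ! i = y" "y \<noteq> c'"
      by (auto simp: in_set_conv_nth)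
    let ?rs1 = "filter (\<lambda>r. r \<noteq> c') rs"
    from moves i have len: "i < length ?rs1" and move: "y \<in> cnbhd V E (?rs1 ! i)"
      by (auto simp: list_all2_conv_all_nth)
    from len have "?rs1 ! i \<in> set ?rs1" by (rule nth_mem)
    then have "?rs1 ! i \<in> S" "?rs1 ! i \<noteq> c'" using cop_clears_step.prems by auto
    then show "y \<in> robber_spread V E c' S" using move \<open>y \<noteq> c'\<close> by (simp add: robber_spreadI)
  qed
  then have "\<forall>rs'. list_all2 (\<lambda>r r'. r' \<in> cnbhd V E r) (filter (\<lambda>r. r \<noteq> c') rs) rs'
      \<longrightarrow> cop_wins_within V E n c' (filter (\<lambda>r. r \<noteq> c') rs')" by blast
  then show ?case using cop_clears_step.hyps(1) by (auto simp: Let_def)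
qed

lemma cop_clears_subset: "cop_clears V E n c S \<Longrightarrow> T \<subseteq> S \<Longrightarrow> cop_clears V E n c T"
proof (induction arbitrary: T rule: cop_clears.induct)
  case (cop_clears_empty n c)
  then show ?case by (simp add: cop_clears.cop_clears_empty)
next
  case (cop_clears_step c' c n S)
  have "robber_spread V E c' T \<subseteq> robber_spread V E c' S"
    using cop_clears_step.prems by (rule robber_spread_mono)
  then show ?case using cop_clears_step by (blast intro: cop_clears.cop_clears_step)
qed

lemma cop_clears_mono: "cop_clears V E n c S \<Longrightarrow> n \<le> m \<Longrightarrow> cop_clears V E m c S"
proof (induction arbitrary: m rule: cop_clears.induct)
  case (cop_clears_empty n c)
  then show ?case by (simp add: cop_clears.cop_clears_empty)
next
  case (cop_clears_step c' c n S)
  then obtain m' where "m = Suc m'" "n \<le> m'" by (cases m) auto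
  then show ?case using cop_clears_step by (blast intro: cop_clears.cop_clears_step)
qed

lemma cop_clears_stepI:
  "c' \<in> cnbhd V E c \<Longrightarrow> robber_spread V E c' S \<subseteq> T \<Longrightarrow> cop_clears V E n c' T
    \<Longrightarrow> cop_clears V E (Suc n) c S"
  by (blast intro: cop_clears.cop_clears_step cop_clears_subset)

lemma cop_captures_by_if_cop_clears:
  assumes "c \<in> V" "cop_clears V E n c (V - {c})"
  shows "cop_captures_by V E m n"
  unfolding cop_captures_by_def
proof (intro bexI[OF _ assms(1)] allI impI)
  fix rs0 :: "'a list" assume "length rs0 = m \<and> set rs0 \<subseteq> V"
  then have "set (filter (\<lambda>r. r \<noteq> c) rs0) \<subseteq> V - {c}" by auto
  then show "cop_wins_within V E n c (filter (\<lambda>r. r \<noteq> c) rs0)"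
    by (rule cop_clears_imp_cop_wins_within[OF assms(2)])
qed

definition lazy_walk :: "'a set \<Rightarrow> ('a \<Rightarrow> 'a \<Rightarrow> bool) \<Rightarrow> 'a list \<Rightarrow> bool" where
  "lazy_walk V E w \<longleftrightarrow> set w \<subseteq> V \<and> successively (\<lambda>x y. y \<in> cnbhd V E x) w"

definition walks_from :: "'a set \<Rightarrow> ('a \<Rightarrow> 'a \<Rightarrow> bool) \<Rightarrow> nat \<Rightarrow> 'a set \<Rightarrow> 'a list set" where
  "walks_from V E n S = {w. lazy_walk V E w \<and> length w = Suc n \<and> hd w \<in> S}"

lemma lazy_walk_Cons:
  "lazy_walk V E (x # w) \<longleftrightarrow> x \<in> V \<and> lazy_walk V E w \<and> (w \<noteq> [] \<longrightarrow> hd w \<in> cnbhd V E x)"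
  unfolding lazy_walk_def by (auto simp: successively_Cons)

lemma lazy_walk_replicate: "v \<in> V \<Longrightarrow> lazy_walk V E (replicate n v)"
  unfolding lazy_walk_def cnbhd_def by (induction n) (auto simp: successively_Cons)

lemma walks_from_nonempty: "S \<subseteq> V \<Longrightarrow> S \<noteq> {} \<Longrightarrow> walks_from V E n S \<noteq> {}"
proof -
  assume "S \<subseteq> V" "S \<noteq> {}"
  then obtain v where "v \<in> S" "v \<in> V" by blast
  then have "replicate (Suc n) v \<in> walks_from V E n S"
    unfolding walks_from_def using lazy_walk_replicate[of v V E "Suc n"] by simp
  then show ?thesis by blast
qed

lemma finite_walks_from: "finite V \<Longrightarrow> finite (walks_from V E n S)"
  by (rule finite_subset[OF _ finite_lists_length_eq[of V "Suc n"]])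
    (auto simp: walks_from_def lazy_walk_def)

definition uncaught :: "'a \<Rightarrow> 'a list list \<Rightarrow> 'a list list" where
  "uncaught c Ws = filter (\<lambda>w. hd w \<noteq> c) Ws"

lemma map_hd_uncaught: "map hd (uncaught c Ws) = filter (\<lambda>r. r \<noteq> c) (map hd Ws)"
  unfolding uncaught_def by (simp add: filter_map o_def)

lemma walks_from_step:
  assumes "S \<subseteq> V" and Ws: "set Ws = walks_from V E (Suc k) S"
  shows "set (uncaught c (map tl (uncaught c Ws))) = walks_from V E k (robber_spread V E c S)"
proof (intro equalityI subsetI)
  fix w assume "w \<in> set (uncaught c (map tl (uncaught c Ws)))"
  then obtain w0 where "w0 \<in> set Ws" "hd w0 \<noteq> c" "w = tl w0" "hd w \<noteq> c"
    unfolding uncaught_def by auto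
  moreover from this(1) Ws have "lazy_walk V E w0" "length w0 = Suc (Suc k)" "hd w0 \<in> S"
    unfolding walks_from_def by auto
  moreover have "w0 = hd w0 # w"
    using \<open>length w0 = Suc (Suc k)\<close> \<open>w = tl w0\<close> by (metis hd_Cons_tl list.size(3) nat.distinct(1))
  ultimately obtain x where x: "x \<in> S" "x \<noteq> c" "hd w \<noteq> c" "lazy_walk V E (x # w)"
    "length w = Suc k"
    by (metis length_Cons nat.inject)
  then have "w \<noteq> []" "lazy_walk V E w" "hd w \<in> cnbhd V E x" by (auto simp: lazy_walk_Cons)
  with x show "w \<in> walks_from V E k (robber_spread V E c S)"
    unfolding walks_from_def by (simp add: robber_spreadI)
next
  fix w assume "w \<in> walks_from V E k (robber_spread V E c S)"
  then have w: "lazy_walk V E w" "length w = Suc k" "hd w \<in> robber_spread V E c S"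
    unfolding walks_from_def by auto
  then obtain x where x: "x \<in> S" "x \<noteq> c" "hd w \<in> cnbhd V E x" "hd w \<noteq> c"
    unfolding robber_spread_def by auto
  have "lazy_walk V E (x # w)" using w x \<open>S \<subseteq> V\<close> by (auto simp: lazy_walk_Cons)
  then have "x # w \<in> set (uncaught c Ws)"
    using Ws w x unfolding walks_from_def uncaught_def by auto
  then have "w \<in> set (map tl (uncaught c Ws))"
    by (metis image_eqI list.sel(3) list.set_map)
  then show "w \<in> set (uncaught c (map tl (uncaught c Ws)))"
    using x(4) unfolding uncaught_def by simp
qed

lemma walks_step_moves:
  "\<forall>w\<in>set Ws. lazy_walk V E w \<and> 2 \<le> length w
    \<Longrightarrow> list_all2 (\<lambda>r r'. r' \<in> cnbhd V E r) (map hd Ws) (map (hd \<circ> tl) Ws)"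
proof (induction Ws)
  case Nil
  then show ?case by simp
next
  case (Cons w Ws)
  then have "lazy_walk V E w" "2 \<le> length w" by auto
  moreover from this(2) obtain x y u where "w = x # y # u"
    by (auto simp: numeral_2_eq_2 Suc_le_length_iff)
  ultimately show ?case using Cons by (simp add: lazy_walk_Cons)
qed

(* One robber starts on each lazy walk from S and follows it: whatever the cop does, the
   walks of the robbers still in the game are exactly the walks from the spread territory. *)
lemma robbers_survive:
  assumes nonempty: "\<And>c S. safe c S \<Longrightarrow> S \<noteq> {}"
    and step: "\<And>c c' S. safe c S \<Longrightarrow> c' \<in> cnbhd V E c \<Longrightarrow> safe c' (robber_spread V E c' S)"
  shows "safe c S \<Longrightarrow> S \<subseteq> V \<Longrightarrow> set Ws = walks_from V E k S
    \<Longrightarrow> \<not> cop_wins_within V E k c (map hd Ws)"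
proof (induction k arbitrary: c S Ws)
  case 0
  then have "Ws \<noteq> []" using walks_from_nonempty nonempty by fastforce
  then show ?case by simp
next
  case (Suc k)
  show ?case
  proof
    assume "cop_wins_within V E (Suc k) c (map hd Ws)"
    then obtain c' where c': "c' \<in> cnbhd V E c" and
      wins: "filter (\<lambda>r. r \<noteq> c') (map hd Ws) = [] \<or>
        (\<forall>rs'. list_all2 (\<lambda>r r'. r' \<in> cnbhd V E r) (filter (\<lambda>r. r \<noteq> c') (map hd Ws)) rs' \<longrightarrow>
           cop_wins_within V E k c' (filter (\<lambda>r. r \<noteq> c') rs'))"
      using walks_from_nonempty[OF Suc.prems(2) nonempty[OF Suc.prems(1)], of E "Suc k"] Suc.prems(3)
      by (auto simp: Let_def)
    define S' where "S' = robber_spread V E c' S"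
    define Ws1 where "Ws1 = uncaught c' Ws"
    define Ws' where "Ws' = uncaught c' (map tl Ws1)"
    have safe': "safe c' S'" unfolding S'_def using Suc.prems(1) c' by (rule step)
    have S'V: "S' \<subseteq> V" unfolding S'_def by (rule robber_spread_subset)
    have Ws': "set Ws' = walks_from V E k S'"
      unfolding Ws'_def Ws1_def S'_def using Suc.prems(2,3) by (rule walks_from_step)
    then have "Ws' \<noteq> []" using walks_from_nonempty[OF S'V nonempty[OF safe'], of E k] by auto
    then have "map hd Ws1 \<noteq> []" unfolding Ws'_def uncaught_def by auto
    moreover have "\<forall>w\<in>set Ws1. lazy_walk V E w \<and> 2 \<le> length w"
      using Suc.prems(3) unfolding Ws1_def uncaught_def walks_from_def by auto
    then have "list_all2 (\<lambda>r r'. r' \<in> cnbhd V E r) (map hd Ws1) (map (hd \<circ> tl) Ws1)"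
      by (rule walks_step_moves)
    moreover have "filter (\<lambda>r. r \<noteq> c') (map (hd \<circ> tl) Ws1) = map hd Ws'"
      unfolding Ws'_def by (simp add: map_hd_uncaught)
    ultimately have "cop_wins_within V E k c' (map hd Ws')"
      using wins unfolding Ws1_def map_hd_uncaught by metis
    with Suc.IH[OF safe' S'V Ws'] show False by contradiction
  qed
qed

lemma not_cop_captures_by_if_territory_invariant:
  assumes "finite V"
    and nonempty: "\<And>c S. safe c S \<Longrightarrow> S \<noteq> {}"
    and step: "\<And>c c' S. safe c S \<Longrightarrow> c' \<in> cnbhd V E c \<Longrightarrow> safe c' (robber_spread V E c' S)"
    and init: "\<And>c. c \<in> V \<Longrightarrow> safe c (V - {c})"
  shows "\<exists>m. \<not> cop_captures_by V E m N"
proof -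
  obtain AW where AW: "set AW = walks_from V E N V"
    using finite_list[OF finite_walks_from[OF \<open>finite V\<close>]] by blast
  have "\<not> cop_captures_by V E (length AW) N"
  proof
    assume "cop_captures_by V E (length AW) N"
    then obtain c where c: "c \<in> V" and wins: "\<forall>rs0. length rs0 = length AW \<and> set rs0 \<subseteq> V \<longrightarrow>
        cop_wins_within V E N c (filter (\<lambda>r. r \<noteq> c) rs0)"
      unfolding cop_captures_by_def by blast
    have "set (map hd AW) \<subseteq> V" using AW unfolding walks_from_def by auto
    with wins have "cop_wins_within V E N c (filter (\<lambda>r. r \<noteq> c) (map hd AW))" by simp
    have "set (uncaught c AW) = walks_from V E N (V - {c})"
      using AW unfolding uncaught_def walks_from_def by auto
    with c have "\<not> cop_wins_within V E N c (map hd (uncaught c AW))"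
      by (intro robbers_survive[of safe, OF nonempty step init[OF c]]) blast+
    with \<open>cop_wins_within V E N c (filter (\<lambda>r. r \<noteq> c) (map hd AW))\<close> show False
      by (simp add: map_hd_uncaught)
  qed
  then show ?thesis by blast
qed

section \<open>Uniformly bounded capture time\<close>

lemma cop_captures_by_Suc_robbers: "cop_captures_by V E (Suc m) n \<Longrightarrow> cop_captures_by V E m n"
proof -
  assume "cop_captures_by V E (Suc m) n"
  then obtain c where c: "c \<in> V" and wins: "\<forall>rs0. length rs0 = Suc m \<and> set rs0 \<subseteq> V \<longrightarrow>
      cop_wins_within V E n c (filter (\<lambda>r. r \<noteq> c) rs0)"
    unfolding cop_captures_by_def by blast
  show ?thesis unfolding cop_captures_by_def
  proof (intro bexI[OF _ c] allI impI)
    fix rs0 :: "'a list" assume "length rs0 = m \<and> set rs0 \<subseteq> V"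
    then have "length (rs0 @ [c]) = Suc m \<and> set (rs0 @ [c]) \<subseteq> V" using c by simp
    with wins have "cop_wins_within V E n c (filter (\<lambda>r. r \<noteq> c) (rs0 @ [c]))" by blast
    then show "cop_wins_within V E n c (filter (\<lambda>r. r \<noteq> c) rs0)" by simp
  qed
qed

lemma cop_captures_by_fewer_robbers:
  assumes "cop_captures_by V E m' n" and "m \<le> m'"
  shows "cop_captures_by V E m n"
  using assms(2)
proof (induction rule: inc_induct)
  case base
  show ?case by (rule assms(1))
next
  case (step k)
  show ?case by (rule cop_captures_by_Suc_robbers[OF step.IH])
qed

lemma strong_cop_win_iff_uniform_bound:
  "strong_cop_win V E \<longleftrightarrow> (\<exists>B. \<forall>m. cop_captures_by V E m B)"
proof
  assume "strong_cop_win V E"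
  then obtain L where captures: "\<And>m. \<exists>n. cop_captures_by V E m n"
    and "(\<lambda>m. capt V E m) \<longlonglongrightarrow> L"
    unfolding strong_cop_win_def by blast
  then obtain m0 where m0: "\<And>m. m0 \<le> m \<Longrightarrow> capt V E m = L"
    unfolding tendsto_discrete eventually_sequentially by blast
  have "cop_captures_by V E m L" for m
  proof -
    have "cop_captures_by V E (max m m0) (capt V E (max m m0))"
      unfolding capt_def using captures by (rule LeastI_ex)
    then have "cop_captures_by V E (max m m0) L" using m0[of "max m m0"] by simp
    then show ?thesis by (rule cop_captures_by_fewer_robbers) simp
  qed
  then show "\<exists>B. \<forall>m. cop_captures_by V E m B" by blast
next
  assume "\<exists>B. \<forall>m. cop_captures_by V E m B"
  then obtain B where B: "\<And>m. cop_captures_by V E m B" by blast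
  have "incseq (capt V E)"
  proof (rule incseq_SucI)
    fix m
    have "cop_captures_by V E (Suc m) (capt V E (Suc m))"
      unfolding capt_def using B by (rule LeastI)
    then have "cop_captures_by V E m (capt V E (Suc m))" by (rule cop_captures_by_Suc_robbers)
    then show "capt V E m \<le> capt V E (Suc m)" unfolding capt_def by (rule Least_le)
  qed
  moreover have "bdd_above (range (capt V E))"
  proof (rule bdd_aboveI2)
    show "capt V E m \<le> B" for m unfolding capt_def using B by (rule Least_le)
  qed
  ultimately have "capt V E \<longlonglongrightarrow> (SUP m. capt V E m)" by (rule LIMSEQ_incseq_SUP[rotated])
  then show "strong_cop_win V E"
    unfolding strong_cop_win_def cop_win_def using B by blast
qed

section \<open>Trees\<close>

lemma leaf_neighbour_unique:
  assumes "v \<in> leaves V E" "E v u" "E v u'" "u \<in> V" "u' \<in> V"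
  shows "u = u'"
proof -
  have "card {w \<in> V. E v w} = 1" using assms(1) unfolding leaves_def by auto
  then obtain z where z: "{w \<in> V. E v w} = {z}" by (rule card_1_singletonE)
  have "u \<in> {w \<in> V. E v w}" "u' \<in> {w \<in> V. E v w}" using assms(2-) by auto
  then show ?thesis unfolding z by simp
qed

lemma leaf_has_neighbour: "v \<in> leaves V E \<Longrightarrow> \<exists>u\<in>V. E v u"
  unfolding leaves_def by (metis (mono_tags, lifting) card.empty empty_Collect_eq mem_Collect_eq zero_neq_one)

lemma non_leaf_has_other_neighbour:
  assumes "a \<in> V" "a \<notin> leaves V E" "E a c" "c \<in> V"
  shows "\<exists>b. E a b \<and> b \<noteq> c"
proof (rule ccontr)
  assume "\<not> ?thesis"
  then have "{w \<in> V. E a w} = {c}" using assms(3,4) by blast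
  then show False using assms(1,2) unfolding leaves_def by simp
qed

lemma rtrancl_path_successively:
  "rtrancl_path r x xs y \<Longrightarrow> successively r (x # xs) \<and> last (x # xs) = y"
  by (induction rule: rtrancl_path.induct) (auto simp: successively_Cons)

definition delete_vertex :: "('a \<Rightarrow> 'a \<Rightarrow> bool) \<Rightarrow> 'a \<Rightarrow> 'a \<Rightarrow> 'a \<Rightarrow> bool" where
  "delete_vertex E c x y \<longleftrightarrow> E x y \<and> x \<noteq> c \<and> y \<noteq> c"

definition inner_path :: "'a set \<Rightarrow> ('a \<Rightarrow> 'a \<Rightarrow> bool) \<Rightarrow> 'a list \<Rightarrow> bool" where
  "inner_path V E xs \<longleftrightarrow> xs \<noteq> [] \<and> distinct xs \<and> set xs \<subseteq> V - leaves V E \<and> successively E xs"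

locale tree =
  fixes V :: "'a set" and E :: "'a \<Rightarrow> 'a \<Rightarrow> bool"
  assumes is_tree: "is_tree V E"
begin

lemma finite_V: "finite V"
  and V_nonempty: "V \<noteq> {}"
  and edge_sym: "E u v \<Longrightarrow> E v u"
  and edge_in_V: "E u v \<Longrightarrow> u \<in> V" "E u v \<Longrightarrow> v \<in> V"
  and no_loop: "\<not> E v v"
  and no_cycle: "\<not> is_cycle V E xs"
  using is_tree unfolding is_tree_def is_simple_graph_def by blast+

lemma subset_if_edge_closed:
  assumes "u \<in> V" "u \<in> Y" and closed: "\<And>x y. x \<in> Y \<Longrightarrow> E x y \<Longrightarrow> y \<in> Y"
  shows "V \<subseteq> Y"
proof
  fix v assume "v \<in> V"
  with \<open>u \<in> V\<close> have "(\<lambda>x y. E x y \<and> x \<in> V \<and> y \<in> V)\<^sup>*\<^sup>* u v"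
    using is_tree unfolding is_tree_def connected_graph_def by blast
  then show "v \<in> Y"
    by (induction rule: rtranclp_induct) (use \<open>u \<in> Y\<close> closed in blast)+
qed

lemma adjacent_leaves:
  assumes "u \<in> leaves V E" "v \<in> leaves V E" "E u v"
  shows "V \<subseteq> {u, v}"
proof (rule subset_if_edge_closed)
  show "u \<in> V" "u \<in> {u, v}" using edge_in_V assms(3) by auto
  fix x y assume "x \<in> {u, v}" "E x y"
  then consider "E u y" | "E v y" by blast
  then show "y \<in> {u, v}"
  proof cases
    case 1
    then show ?thesis using leaf_neighbour_unique[OF assms(1,3)] edge_in_V assms(3) by blast
  next
    case 2
    then show ?thesis using leaf_neighbour_unique[OF assms(2) edge_sym[OF assms(3)]] edge_in_V assms(3)
      by blast
  qed
qed

lemma path_in_V: "successively E (x # y # zs) \<Longrightarrow> set (x # y # zs) \<subseteq> V"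
  by (induction zs arbitrary: x y) (auto dest: edge_in_V)

lemma path_no_closing_edge:
  assumes "distinct ys" "set ys \<subseteq> V" "successively E ys" "3 \<le> length ys"
  shows "\<not> E (last ys) (hd ys)"
  using no_cycle[of ys] assms unfolding is_cycle_def successively_conv_nth by blast

(* A chord would close a cycle with the segment of the path between its ends. *)
lemma path_edge_consecutive:
  assumes path: "distinct xs" "set xs \<subseteq> V" "successively E xs"
    and ij: "i < j" "j < length xs" and edge: "E (xs ! i) (xs ! j)"
  shows "j = Suc i"
proof (rule ccontr)
  assume "j \<noteq> Suc i"
  define zs where "zs = take (j - i + 1) (drop i xs)"
  have len: "length zs = j - i + 1" and nth: "\<And>k. k \<le> j - i \<Longrightarrow> zs ! k = xs ! (i + k)"
    unfolding zs_def using ij by auto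
  have "distinct zs" unfolding zs_def using path(1) by simp
  moreover have "set zs \<subseteq> V" unfolding zs_def
    using path(2) by (meson dual_order.trans set_drop_subset set_take_subset)
  moreover have "successively E zs"
    unfolding successively_conv_nth using len nth successively_nth[OF path(3)] ij by auto
  moreover have "3 \<le> length zs" using len ij \<open>j \<noteq> Suc i\<close> by simp
  moreover have "hd zs = xs ! i" "last zs = xs ! j"
    using len nth[of 0] nth[of "j - i"] ij
    by (simp_all add: hd_conv_nth last_conv_nth[of zs] flip: length_greater_0_conv)
  ultimately show False using path_no_closing_edge edge edge_sym by metis
qed

lemma neighbours_disconnected_by_deletion:
  assumes "E c u" "E c v" "u \<noteq> v"
  shows "\<not> (delete_vertex E c)\<^sup>*\<^sup>* u v"
proof
  assume "(delete_vertex E c)\<^sup>*\<^sup>* u v"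
  then obtain xs where "rtrancl_path (delete_vertex E c) u xs v"
    unfolding rtranclp_eq_rtrancl_path by blast
  then obtain xs where xs: "rtrancl_path (delete_vertex E c) u xs v" "distinct (u # xs)"
    by (rule rtrancl_path_distinct)
  have "successively (delete_vertex E c) (u # xs)" "last (u # xs) = v"
    using rtrancl_path_successively[OF xs(1)] by auto
  then have path: "successively E (c # u # xs)"
    using assms(1) by (auto simp: successively_Cons delete_vertex_def elim: successively_mono)
  have "c \<notin> set xs"
    using rtrancl_path_Range[OF xs(1)] unfolding delete_vertex_def by blast
  then have "distinct (c # u # xs)" using xs(2) assms(1) no_loop by auto
  moreover have "set (c # u # xs) \<subseteq> V"
    using path by (rule path_in_V)
  moreover have "3 \<le> length (c # u # xs)"
    using \<open>last (u # xs) = v\<close> \<open>u \<noteq> v\<close> by (cases xs) auto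
  ultimately have "\<not> E (last (c # u # xs)) c"
    using path_no_closing_edge path by fastforce
  then show False using \<open>last (u # xs) = v\<close> assms(2) edge_sym by simp
qed

(* A leaf next to X has no other neighbour, so connectivity yields an edge from X to an
   inner vertex outside X. *)
lemma inner_edge_leaving:
  assumes X: "X \<subseteq> V - leaves V E" "X \<noteq> {}" and w: "w \<in> V - leaves V E" "w \<notin> X"
  shows "\<exists>x\<in>X. \<exists>y\<in>V - leaves V E - X. E x y"
proof (rule ccontr)
  assume no_exit: "\<not> ?thesis"
  define Y where "Y = X \<union> {l \<in> leaves V E. \<exists>x\<in>X. E l x}"
  obtain u where "u \<in> X" using X(2) by blast
  have "V \<subseteq> Y"
  proof (rule subset_if_edge_closed)
    show "u \<in> V" "u \<in> Y" using \<open>u \<in> X\<close> X(1) unfolding Y_def by auto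
  next
    fix x y assume "x \<in> Y" "E x y"
    show "y \<in> Y"
    proof (cases "x \<in> X")
      case True
      have "y \<in> V" using \<open>E x y\<close> by (rule edge_in_V)
      then show ?thesis
        using True no_exit \<open>E x y\<close> edge_sym unfolding Y_def by blast
    next
      case False
      then obtain x0 where "x \<in> leaves V E" "x0 \<in> X" "E x x0"
        using \<open>x \<in> Y\<close> unfolding Y_def by blast
      then have "y = x0"
        using leaf_neighbour_unique \<open>E x y\<close> edge_in_V by metis
      then show ?thesis using \<open>x0 \<in> X\<close> unfolding Y_def by blast
    qed
  qed
  then show False using w unfolding Y_def by blast
qed

lemma induced_is_path_if_path:
  assumes path: "distinct xs" "set xs \<subseteq> V" "successively E xs"
  shows "induced_is_path (set xs) E"
  unfolding induced_is_path_def
proof (rule disjI2, rule exI[of _ xs], intro conjI ballI refl path(1))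
  fix u v assume "u \<in> set xs" "v \<in> set xs"
  then obtain i j where ij: "i < length xs" "xs ! i = u" "j < length xs" "xs ! j = v"
    by (auto simp: in_set_conv_nth)
  show "E u v \<longleftrightarrow> (\<exists>k. Suc k < length xs \<and>
      (xs ! k = u \<and> xs ! Suc k = v \<or> xs ! k = v \<and> xs ! Suc k = u))"
  proof
    assume "E u v"
    then have "i < j \<and> j = Suc i \<or> j < i \<and> i = Suc j"
      using path_edge_consecutive[OF path] ij edge_sym no_loop
      by (metis linorder_neqE_nat)
    then show "\<exists>k. Suc k < length xs \<and>
        (xs ! k = u \<and> xs ! Suc k = v \<or> xs ! k = v \<and> xs ! Suc k = u)"
      using ij by auto
  next
    assume "\<exists>k. Suc k < length xs \<and>
        (xs ! k = u \<and> xs ! Suc k = v \<or> xs ! k = v \<and> xs ! Suc k = u)"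
    then show "E u v" using successively_nth[OF path(3)] edge_sym by blast
  qed
qed

lemma exists_longest_inner_path:
  assumes "V - leaves V E \<noteq> {}"
  shows "\<exists>xs. inner_path V E xs \<and> (\<forall>ys. inner_path V E ys \<longrightarrow> length ys \<le> length xs)"
proof -
  obtain w where "w \<in> V - leaves V E" using assms by blast
  then have "inner_path V E [w]" unfolding inner_path_def by simp
  moreover have "length ys < Suc (card V)" if "inner_path V E ys" for ys
    using that distinct_card[of ys] card_mono[of V "set ys"] finite_V
    unfolding inner_path_def by fastforce
  ultimately show ?thesis
    using ex_has_greatest_nat[of "inner_path V E" "[w]" length "Suc (card V)"] by blast
qed

(* A missed inner vertex would either extend the path at an end or give an interior vertex
   of the path a third inner neighbour. *)
lemma longest_inner_path_covers:
  assumes few: "\<And>c. card {a \<in> V - leaves V E. E c a} < 3"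
    and path: "inner_path V E xs"
    and longest: "\<And>ys. inner_path V E ys \<Longrightarrow> length ys \<le> length xs"
  shows "set xs = V - leaves V E"
proof (rule ccontr)
  let ?W = "V - leaves V E"
  have xs: "xs \<noteq> []" "distinct xs" "set xs \<subseteq> ?W" "successively E xs"
    using path unfolding inner_path_def by auto
  assume "set xs \<noteq> ?W"
  then obtain x y where "x \<in> set xs" "y \<in> ?W" "y \<notin> set xs" "E x y"
    using inner_edge_leaving[of "set xs"] xs(1,3) by blast
  then obtain i where i: "i < length xs" "xs ! i = x" by (auto simp: in_set_conv_nth)
  consider "i = 0" | "i = length xs - 1" | "0 < i" "i < length xs - 1"
    using i by (cases "i = 0 \<or> i = length xs - 1") auto
  then show False
  proof cases
    case 1
    then have "inner_path V E (y # xs)"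
      using xs \<open>y \<in> ?W\<close> \<open>y \<notin> set xs\<close> \<open>E x y\<close> i edge_sym
      unfolding inner_path_def by (auto simp: successively_Cons hd_conv_nth)
    then show False using longest by fastforce
  next
    case 2
    then have "inner_path V E (xs @ [y])"
      using xs \<open>y \<in> ?W\<close> \<open>y \<notin> set xs\<close> \<open>E x y\<close> i
      unfolding inner_path_def by (auto simp: successively_append_iff last_conv_nth)
    then show False using longest by fastforce
  next
    case 3
    let ?l = "xs ! (i - 1)" and ?r = "xs ! Suc i"
    have "E ?l x" "E x ?r"
      using successively_nth[OF xs(4), of "i - 1"] successively_nth[OF xs(4), of i] 3 i by auto
    moreover have on_path: "?l \<in> set xs" "?r \<in> set xs" using 3 by auto
    have "?l \<in> ?W" "?r \<in> ?W" "?l \<noteq> y" "?r \<noteq> y"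
      using on_path xs(3) \<open>y \<notin> set xs\<close> by auto
    moreover have "?l \<noteq> ?r" using xs(2) 3 by (auto simp: nth_eq_iff_index_eq)
    ultimately have "{?l, ?r, y} \<subseteq> {a \<in> ?W. E x a}"
      using \<open>y \<in> ?W\<close> \<open>E x y\<close> edge_sym by auto
    moreover have "card {?l, ?r, y} = 3" using \<open>?l \<noteq> ?r\<close> \<open>?l \<noteq> y\<close> \<open>?r \<noteq> y\<close> by simp
    ultimately show False
      using few[of x] card_mono[OF _ \<open>{?l, ?r, y} \<subseteq> _\<close>] finite_V by fastforce
  qed
qed

lemma three_inner_neighbours_if_not_caterpillar:
  assumes "\<not> caterpillar V E"
  shows "\<exists>c. 3 \<le> card {a \<in> V - leaves V E. E c a}"
proof (rule ccontr)
  assume "\<not> ?thesis"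
  then have few: "card {a \<in> V - leaves V E. E c a} < 3" for c by (simp add: not_le)
  have not_path: "\<not> induced_is_path (V - leaves V E) E"
    using assms is_tree unfolding caterpillar_def by simp
  then have "V - leaves V E \<noteq> {}" unfolding induced_is_path_def by blast
  then obtain xs where "inner_path V E xs" "\<And>ys. inner_path V E ys \<Longrightarrow> length ys \<le> length xs"
    using exists_longest_inner_path by blast
  then have "set xs = V - leaves V E" "distinct xs" "successively E xs"
    using longest_inner_path_covers[OF few] unfolding inner_path_def by auto
  then show False
    using not_path induced_is_path_if_path[of xs] by auto
qed

end

section \<open>Spiders\<close>

lemma two_other_elements:
  assumes "3 \<le> card A" "a \<in> A"
  obtains a1 a2 where "a1 \<in> A" "a2 \<in> A" "a1 \<noteq> a2" "a1 \<noteq> a" "a2 \<noteq> a"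
proof -
  have "Suc (Suc 0) \<le> card (A - {a})" using assms by simp
  then obtain a1 B where "A - {a} = insert a1 B" "a1 \<notin> B" "Suc 0 \<le> card B"
    unfolding card_le_Suc_iff by blast
  moreover from this(3) obtain a2 where "a2 \<in> B"
    unfolding card_le_Suc_iff by blast
  ultimately show thesis using that[of a1 a2] by blast
qed

locale spider = tree +
  fixes c :: 'a and A :: "'a set" and b :: "'a \<Rightarrow> 'a"
  assumes three_legs: "3 \<le> card A"
    and centre_adj: "a \<in> A \<Longrightarrow> E c a"
    and leg_adj: "a \<in> A \<Longrightarrow> E a (b a)"
    and leg_end_ne_centre: "a \<in> A \<Longrightarrow> b a \<noteq> c"
begin

definition branch :: "'a \<Rightarrow> 'a set" where
  "branch a = {x. (delete_vertex E c)\<^sup>*\<^sup>* a x}"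

lemma legs_nonempty: "A \<noteq> {}"
  using three_legs by auto

lemma centre_in_V: "c \<in> V"
  using legs_nonempty centre_adj edge_in_V(1) by blast

lemma leg_end_in_V: "a \<in> A \<Longrightarrow> b a \<in> V"
  using leg_adj edge_in_V by blast

lemma foot_in_V: "a \<in> A \<Longrightarrow> a \<in> V"
  using centre_adj edge_in_V by blast

lemma foot_ne_centre: "a \<in> A \<Longrightarrow> a \<noteq> c"
  using centre_adj no_loop by blast

lemma foot_in_branch: "a \<in> A \<Longrightarrow> a \<in> branch a"
  unfolding branch_def by simp

lemma leg_end_in_branch: "a \<in> A \<Longrightarrow> b a \<in> branch a"
  unfolding branch_def delete_vertex_def using leg_adj foot_ne_centre leg_end_ne_centre by blast

lemma branch_ne_centre: "a \<in> A \<Longrightarrow> x \<in> branch a \<Longrightarrow> x \<noteq> c"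
  unfolding branch_def by (erule CollectE, erule rtranclp.cases) (auto simp: foot_ne_centre delete_vertex_def)

lemma centre_notin_branch: "a \<in> A \<Longrightarrow> c \<notin> branch a"
  using branch_ne_centre by blast

lemma branch_edge:
  assumes "a \<in> A" "x \<in> branch a" "E x y" "y \<noteq> c"
  shows "y \<in> branch a"
proof -
  have "delete_vertex E c x y"
    using assms branch_ne_centre unfolding delete_vertex_def by blast
  with assms(2) show ?thesis unfolding branch_def by (simp add: rtranclp.rtrancl_into_rtrancl)
qed

lemma branch_step: "a \<in> A \<Longrightarrow> x \<in> branch a \<Longrightarrow> y \<in> cnbhd V E x \<Longrightarrow> y = c \<or> y \<in> branch a"
  unfolding cnbhd_def using branch_edge by blast

lemma branches_disjoint:
  assumes "a \<in> A" "a' \<in> A" "a \<noteq> a'" "x \<in> branch a"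
  shows "x \<notin> branch a'"
proof
  assume "x \<in> branch a'"
  have "symp (delete_vertex E c)" by (auto intro: sympI simp: delete_vertex_def edge_sym)
  then have "(delete_vertex E c)\<^sup>*\<^sup>* x a'"
    using \<open>x \<in> branch a'\<close> unfolding branch_def by (blast dest: sympD[OF symp_rtranclp])
  then have "(delete_vertex E c)\<^sup>*\<^sup>* a a'"
    using assms(4) unfolding branch_def by simp
  then show False
    using neighbours_disconnected_by_deletion centre_adj assms(1-3) by blast
qed

lemma branch_entry:
  assumes "a \<in> A" "x \<notin> branch a" "y \<in> cnbhd V E x" "y \<in> branch a"
  shows "x = c \<and> y = a"
proof -
  have "E y x" using assms(2-4) edge_sym unfolding cnbhd_def by auto
  then have "x = c" using branch_edge[OF assms(1,4)] assms(2) by blast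
  moreover have "y = a"
  proof (rule ccontr)
    assume "y \<noteq> a"
    moreover have "(delete_vertex E c)\<^sup>*\<^sup>* a y" using assms(4) unfolding branch_def by simp
    ultimately show False
      using neighbours_disconnected_by_deletion centre_adj[OF assms(1)] edge_sym \<open>E y x\<close> \<open>x = c\<close>
      by blast
  qed
  ultimately show ?thesis ..
qed

definition leg_held :: "'a set \<Rightarrow> 'a \<Rightarrow> bool" where
  "leg_held S a \<longleftrightarrow> a \<in> S \<and> b a \<in> S"

(* x is the position of the cop, S the robber territory. *)
inductive robbers_safe :: "'a \<Rightarrow> 'a set \<Rightarrow> bool" where
  two_legs: "\<lbrakk>a \<in> A; a' \<in> A; a \<noteq> a'; leg_held S a; leg_held S a'; x \<notin> branch a; x \<notin> branch a'\<rbrakk>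
    \<Longrightarrow> robbers_safe x S"
| at_foot: "\<lbrakk>a \<in> A; b a \<in> S; c \<in> S; a' \<in> A; a' \<noteq> a; leg_held S a'\<rbrakk>
    \<Longrightarrow> robbers_safe a S"
| in_branch: "\<lbrakk>a \<in> A; x \<in> branch a; c \<in> S; \<And>a'. a' \<in> A \<Longrightarrow> a' \<noteq> a \<Longrightarrow> a' \<in> S\<rbrakk>
    \<Longrightarrow> robbers_safe x S"

lemma robbers_safe_nonempty: "robbers_safe x S \<Longrightarrow> S \<noteq> {}"
  by (induction rule: robbers_safe.induct) (auto simp: leg_held_def)

lemma robbers_safe_init:
  assumes "x \<in> V"
  shows "robbers_safe x (V - {x})"
proof -
  obtain a where a: "a \<in> A" "\<forall>a'\<in>A. x \<in> branch a' \<longrightarrow> a' = a"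
    using legs_nonempty branches_disjoint by blast
  obtain a1 a2 where "a1 \<in> A" "a2 \<in> A" "a1 \<noteq> a2" "a1 \<noteq> a" "a2 \<noteq> a"
    using two_other_elements[OF three_legs a(1)] .
  moreover have "x \<notin> branch a1" "x \<notin> branch a2" using a calculation by auto
  moreover have "leg_held (V - {x}) a1" "leg_held (V - {x}) a2"
    using calculation foot_in_branch leg_end_in_branch foot_in_V leg_end_in_V
    unfolding leg_held_def by fastforce+
  ultimately show ?thesis by (blast intro: two_legs)
qed

lemma leg_held_spread:
  "a \<in> A \<Longrightarrow> leg_held S a \<Longrightarrow> y \<notin> branch a \<Longrightarrow> leg_held (robber_spread V E y S) a"
  unfolding leg_held_def using foot_in_branch leg_end_in_branch foot_in_V leg_end_in_V
  by (metis robber_spread_stay)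

lemma robbers_safe_if_centre_held:
  assumes "a \<in> A" "y \<in> branch a" "c \<in> S"
  shows "robbers_safe y (robber_spread V E y S)"
proof -
  have "c \<noteq> y" using assms(1,2) branch_ne_centre by blast
  then have "c \<in> robber_spread V E y S" by (rule robber_spread_stay[OF assms(3) centre_in_V])
  moreover have "a' \<in> robber_spread V E y S" if "a' \<in> A" "a' \<noteq> a" for a'
  proof (rule robber_spread_move[of c S E a' V y, OF assms(3) centre_adj[OF that(1)] foot_in_V[OF that(1)]
        \<open>c \<noteq> y\<close>])
    have "y \<notin> branch a'" using branches_disjoint[OF assms(1) that(1)] that(2) assms(2) by metis
    then show "a' \<noteq> y" using foot_in_branch[OF that(1)] by blast
  qed
  ultimately show ?thesis using assms(1,2) by (blast intro: in_branch)
qed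

lemma robbers_safe_step_entering:
  assumes "a \<in> A" "a' \<in> A" "a \<noteq> a'" "leg_held S a" "leg_held S a'"
    and "x \<notin> branch a" "y \<in> cnbhd V E x" "y \<in> branch a"
  shows "robbers_safe y (robber_spread V E y S)"
proof -
  have "x = c" "y = a" using branch_entry assms(1,6-8) by blast+
  have "b a \<in> robber_spread V E y S"
    using robber_spread_stay assms(1,4) \<open>y = a\<close> leg_end_in_V leg_adj no_loop
    unfolding leg_held_def by metis
  moreover have "c \<in> robber_spread V E y S"
    using robber_spread_move[of a' S E c V y] assms(1-3,5) \<open>y = a\<close> edge_sym centre_adj centre_in_V
      foot_ne_centre unfolding leg_held_def by metis
  moreover have "y \<notin> branch a'" using branches_disjoint[OF assms(1-3,8)] .
  then have "leg_held (robber_spread V E y S) a'" by (rule leg_held_spread[OF assms(2,5)])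
  ultimately show ?thesis using assms(1-3) \<open>y = a\<close> by (blast intro: at_foot)
qed

lemma robbers_safe_step_two_legs:
  assumes "a \<in> A" "a' \<in> A" "a \<noteq> a'" "leg_held S a" "leg_held S a'"
    and "x \<notin> branch a" "x \<notin> branch a'" "y \<in> cnbhd V E x"
  shows "robbers_safe y (robber_spread V E y S)"
proof -
  consider "y \<in> branch a" | "y \<in> branch a'" | "y \<notin> branch a" "y \<notin> branch a'" by blast
  then show ?thesis
  proof cases
    case 1
    then show ?thesis using robbers_safe_step_entering assms by blast
  next
    case 2
    then show ?thesis using robbers_safe_step_entering[of a' a] assms by blast
  next
    case 3
    then show ?thesis using assms leg_held_spread by (blast intro: two_legs)
  qed
qed

lemma robbers_safe_step_at_foot:
  assumes a: "a \<in> A" "b a \<in> S" "c \<in> S" and a': "a' \<in> A" "a' \<noteq> a" "leg_held S a'"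
    and y: "y \<in> cnbhd V E a"
  shows "robbers_safe y (robber_spread V E y S)"
proof -
  from branch_step[OF a(1) foot_in_branch[OF a(1)] y] consider "y = c" | "y \<in> branch a" by blast
  then show ?thesis
  proof cases
    case 1
    have "leg_held (robber_spread V E y S) a"
      using robber_spread_move[of "b a" S E a V y] robber_spread_stay[of "b a" S V y] a 1
        leg_adj edge_sym foot_in_V leg_end_in_V leg_end_ne_centre foot_ne_centre
      unfolding leg_held_def by metis
    moreover have "leg_held (robber_spread V E y S) a'"
      using leg_held_spread a' 1 centre_notin_branch by blast
    ultimately show ?thesis
      using a a' 1 centre_notin_branch by (blast intro: two_legs)
  next
    case 2
    then show ?thesis using robbers_safe_if_centre_held a by blast
  qed
qed

lemma robbers_safe_step_in_branch:
  assumes a: "a \<in> A" "x \<in> branch a" "c \<in> S" "\<And>a'. a' \<in> A \<Longrightarrow> a' \<noteq> a \<Longrightarrow> a' \<in> S"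
    and y: "y \<in> cnbhd V E x"
  shows "robbers_safe y (robber_spread V E y S)"
proof -
  from branch_step[OF a(1,2) y] consider "y = c" | "y \<in> branch a" by blast
  then show ?thesis
  proof cases
    case 1
    obtain a1 a2 where others: "a1 \<in> A" "a2 \<in> A" "a1 \<noteq> a2" "a1 \<noteq> a" "a2 \<noteq> a"
      using two_other_elements[OF three_legs a(1)] .
    have "leg_held (robber_spread V E y S) a'" if "a' \<in> A" "a' \<noteq> a" for a'
      using robber_spread_stay[of a' S V y] robber_spread_move[of a' S E "b a'" V y] a that 1
        leg_adj foot_in_V leg_end_in_V leg_end_ne_centre foot_ne_centre
      unfolding leg_held_def by metis
    then show ?thesis
      using others 1 centre_notin_branch by (blast intro: two_legs)
  next
    case 2
    then show ?thesis using robbers_safe_if_centre_held a by blast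
  qed
qed

lemma robbers_safe_step:
  "robbers_safe x S \<Longrightarrow> y \<in> cnbhd V E x \<Longrightarrow> robbers_safe y (robber_spread V E y S)"
  by (induction rule: robbers_safe.cases)
    (blast intro: robbers_safe_step_two_legs robbers_safe_step_at_foot robbers_safe_step_in_branch)+

lemma not_cop_captures_by: "\<exists>m. \<not> cop_captures_by V E m N"
  by (rule not_cop_captures_by_if_territory_invariant[OF finite_V robbers_safe_nonempty
        robbers_safe_step robbers_safe_init])

end

context tree
begin

lemma not_cop_captures_by_if_not_caterpillar:
  assumes "\<not> caterpillar V E"
  shows "\<exists>m. \<not> cop_captures_by V E m N"
proof -
  obtain c where three: "3 \<le> card {a \<in> V - leaves V E. E c a}" (is "3 \<le> card ?A")
    using three_inner_neighbours_if_not_caterpillar[OF assms] by blast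
  then have "?A \<noteq> {}" by (metis card.empty not_numeral_le_zero)
  then obtain a0 where "a0 \<in> ?A" by blast
  then have "c \<in> V" using edge_in_V by blast
  have other: "\<forall>a\<in>?A. \<exists>b. E a b \<and> b \<noteq> c"
  proof
    fix a assume "a \<in> ?A"
    then show "\<exists>b. E a b \<and> b \<noteq> c"
      using non_leaf_has_other_neighbour[of a V E c] edge_sym \<open>c \<in> V\<close> by auto
  qed
  obtain b where b: "\<forall>a\<in>?A. E a (b a) \<and> b a \<noteq> c" using bchoice[OF other] by blast
  interpret spider V E c ?A b
    using three b by unfold_locales auto
  show ?thesis by (rule not_cop_captures_by)
qed

end

section \<open>Caterpillars\<close>

locale spine = tree +
  fixes xs :: "'a list"
  assumes spine_nonempty: "xs \<noteq> []"
    and spine_distinct: "distinct xs"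
    and spine_in_V: "set xs \<subseteq> V"
    and spine_path: "successively E xs"
    and off_spine_leaves: "V - set xs \<subseteq> leaves V E"
begin

lemma spine_vertex: "i < length xs \<Longrightarrow> xs ! i \<in> V"
  using spine_in_V nth_mem by blast

lemma off_spine_attached:
  assumes "v \<in> V" "v \<notin> set xs"
  shows "\<exists>i<length xs. E v (xs ! i)"
proof -
  have v: "v \<in> leaves V E" using assms off_spine_leaves by blast
  then obtain u where "u \<in> V" "E v u" using leaf_has_neighbour[OF v] by blast
  moreover have "u \<in> set xs"
  proof (rule ccontr)
    assume "u \<notin> set xs"
    then have "u \<in> leaves V E" using off_spine_leaves \<open>u \<in> V\<close> by blast
    then have "V \<subseteq> {v, u}" using adjacent_leaves[OF v _ \<open>E v u\<close>] by blast
    moreover have "hd xs \<in> set xs" using spine_nonempty by simp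
    ultimately show False using spine_in_V assms(2) \<open>u \<notin> set xs\<close> by auto
  qed
  ultimately show ?thesis by (auto simp: in_set_conv_nth)
qed

(* The part of the tree ahead of a cop standing on xs ! j. *)
definition beyond :: "nat \<Rightarrow> 'a set" where
  "beyond j = {v \<in> V. \<exists>i. j < i \<and> i < length xs \<and> (v = xs ! i \<or> (v \<in> leaves V E \<and> E v (xs ! i)))}"

definition hanging :: "nat \<Rightarrow> 'a set" where
  "hanging j = {v \<in> leaves V E. E v (xs ! j)}"

lemma spine_neighbour_beyond:
  assumes i: "j < i" "i < length xs" and y: "E (xs ! i) y"
  shows "y \<in> beyond j \<union> {xs ! j}"
proof (cases "y \<in> set xs")
  case True
  then obtain i' where i': "i' < length xs" "y = xs ! i'" by (auto simp: in_set_conv_nth)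
  then have "i' = Suc i \<or> i = Suc i'"
    using path_edge_consecutive[OF spine_distinct spine_in_V spine_path] i y edge_sym no_loop
    by (metis linorder_neqE_nat)
  then consider "i' = j" | "j < i'" using i by linarith
  then show ?thesis
  proof cases
    case 1
    then show ?thesis using i' by simp
  next
    case 2
    then show ?thesis using i' spine_vertex unfolding beyond_def by blast
  qed
next
  case False
  then have "y \<in> leaves V E" "y \<in> V" using off_spine_leaves edge_in_V(2)[OF y] by blast+
  then show ?thesis using i y edge_sym unfolding beyond_def by blast
qed

lemma neighbourhood_beyond:
  assumes j: "j < length xs" and L: "L \<subseteq> hanging j"
    and x: "x \<in> beyond j \<union> L" and y: "y \<in> cnbhd V E x"
  shows "y \<in> beyond j \<union> L \<union> {xs ! j}"
proof (cases "y = x")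
  case False
  then have "E x y" "y \<in> V" using y unfolding cnbhd_def by auto
  consider (hanging) "x \<in> L"
    | (spine) i where "j < i" "i < length xs" "x = xs ! i"
    | (leaf) i where "j < i" "i < length xs" "x \<in> leaves V E" "E x (xs ! i)"
    using x unfolding beyond_def by blast
  then show ?thesis
  proof cases
    case hanging
    then have "x \<in> leaves V E" "E x (xs ! j)" using L unfolding hanging_def by auto
    then have "y = xs ! j"
      using leaf_neighbour_unique \<open>E x y\<close> \<open>y \<in> V\<close> spine_vertex[OF j] by metis
    then show ?thesis by simp
  next
    case (spine i)
    then show ?thesis using spine_neighbour_beyond \<open>E x y\<close> by blast
  next
    case (leaf i)
    then have "y = xs ! i"
      using leaf_neighbour_unique \<open>E x y\<close> \<open>y \<in> V\<close> spine_vertex by metis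
    then show ?thesis using spine_vertex leaf unfolding beyond_def by blast
  qed
qed (use x in blast)

lemma robber_spread_beyond:
  "j < length xs \<Longrightarrow> L \<subseteq> hanging j \<Longrightarrow>
    robber_spread V E y (beyond j \<union> L) \<subseteq> beyond j \<union> L \<union> {xs ! j} - {y}"
  unfolding robber_spread_def using neighbourhood_beyond by blast

lemma finite_hanging: "finite (hanging j)"
  using finite_V unfolding hanging_def leaves_def by auto

lemma card_hanging_le: "card (hanging j) \<le> card V"
  using finite_V unfolding hanging_def leaves_def by (intro card_mono) auto

(* The cop visits each leaf hanging at xs ! j and comes back: two rounds per leaf. *)
lemma cop_clears_hanging:
  assumes j: "j < length xs" and clears: "cop_clears V E n (xs ! j) (beyond j)"
  shows "finite L \<Longrightarrow> L \<subseteq> hanging j \<Longrightarrow> cop_clears V E (2 * card L + n) (xs ! j) (beyond j \<union> L)"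
proof (induction L rule: finite_induct)
  case empty
  then show ?case using clears by simp
next
  case (insert l L)
  then have L: "L \<subseteq> hanging j" and l: "l \<in> leaves V E" "E l (xs ! j)"
    unfolding hanging_def by auto
  have returned: "cop_clears V E (Suc (2 * card L + n)) l (insert (xs ! j) (beyond j \<union> L))"
  proof (rule cop_clears_stepI[OF _ _ insert.IH[OF L]])
    show "xs ! j \<in> cnbhd V E l" unfolding cnbhd_def using l spine_vertex[OF j] by simp
    show "robber_spread V E (xs ! j) (insert (xs ! j) (beyond j \<union> L)) \<subseteq> beyond j \<union> L"
      using robber_spread_beyond[OF j L] by (auto simp: robber_spread_insert_self)
  qed
  have "cop_clears V E (Suc (Suc (2 * card L + n))) (xs ! j) (insert l (beyond j \<union> L))"
  proof (rule cop_clears_stepI[OF _ _ returned])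
    show "l \<in> cnbhd V E (xs ! j)" unfolding cnbhd_def using l edge_sym edge_in_V by blast
    show "robber_spread V E l (insert l (beyond j \<union> L)) \<subseteq> insert (xs ! j) (beyond j \<union> L)"
      using robber_spread_beyond[OF j L] by (auto simp: robber_spread_insert_self)
  qed
  moreover have "2 * card (insert l L) + n = Suc (Suc (2 * card L + n))"
    using insert.hyps by simp
  ultimately show ?case by simp
qed

lemma beyond_Suc: "beyond j \<subseteq> insert (xs ! Suc j) (beyond (Suc j) \<union> hanging (Suc j))"
proof
  fix v assume "v \<in> beyond j"
  then obtain i where i: "j < i" "i < length xs" "v \<in> V"
    and v: "v = xs ! i \<or> (v \<in> leaves V E \<and> E v (xs ! i))"
    unfolding beyond_def by blast
  show "v \<in> insert (xs ! Suc j) (beyond (Suc j) \<union> hanging (Suc j))"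
  proof (cases "i = Suc j")
    case True
    then show ?thesis using v unfolding hanging_def by auto
  next
    case False
    then have "Suc j < i" using i(1) by simp
    then have "v \<in> beyond (Suc j)" using i(2,3) v unfolding beyond_def by blast
    then show ?thesis by blast
  qed
qed

lemma cop_clears_advance:
  assumes j: "Suc j < length xs"
    and clears: "cop_clears V E n (xs ! Suc j) (beyond (Suc j) \<union> hanging (Suc j))"
  shows "cop_clears V E (Suc n) (xs ! j) (beyond j)"
proof (rule cop_clears_stepI[OF _ _ clears])
  show "xs ! Suc j \<in> cnbhd V E (xs ! j)"
    unfolding cnbhd_def using successively_nth[OF spine_path j] spine_vertex[OF j] by simp
  have "robber_spread V E (xs ! Suc j) (beyond j)
      \<subseteq> robber_spread V E (xs ! Suc j) (beyond (Suc j) \<union> hanging (Suc j))"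
    using robber_spread_mono[OF beyond_Suc[of j], of V E "xs ! Suc j"]
    by (simp add: robber_spread_insert_self)
  also have "\<dots> \<subseteq> beyond (Suc j) \<union> hanging (Suc j)"
    using robber_spread_beyond[OF j order_refl] by blast
  finally show "robber_spread V E (xs ! Suc j) (beyond j) \<subseteq> beyond (Suc j) \<union> hanging (Suc j)" .
qed

lemma cop_clears_from:
  assumes "j < length xs"
  shows "cop_clears V E ((length xs - j) * (2 * card V + 1)) (xs ! j) (beyond j \<union> hanging j)"
proof -
  have "j \<le> length xs - 1" using assms by simp
  then show ?thesis
  proof (induction j rule: inc_induct)
    case base
    have "beyond (length xs - 1) = {}" unfolding beyond_def by auto
    then have "cop_clears V E (2 * card (hanging (length xs - 1)) + 0) (xs ! (length xs - 1))
        (beyond (length xs - 1) \<union> hanging (length xs - 1))"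
      using spine_nonempty finite_hanging
      by (intro cop_clears_hanging) (auto intro: cop_clears_empty)
    then show ?case
    proof (rule cop_clears_mono)
      have "length xs - (length xs - 1) = 1" using spine_nonempty by (simp add: Suc_leI)
      then show "2 * card (hanging (length xs - 1)) + 0
          \<le> (length xs - (length xs - 1)) * (2 * card V + 1)"
        using card_hanging_le[of "length xs - 1"] by simp
    qed
  next
    case (step j)
    then have "cop_clears V E (Suc ((length xs - Suc j) * (2 * card V + 1))) (xs ! j) (beyond j)"
      by (intro cop_clears_advance) auto
    then have "cop_clears V E (2 * card (hanging j) + Suc ((length xs - Suc j) * (2 * card V + 1)))
        (xs ! j) (beyond j \<union> hanging j)"
      using step.hyps finite_hanging by (intro cop_clears_hanging) auto
    moreover have "length xs - j = Suc (length xs - Suc j)" using step.hyps by simp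
    ultimately show ?case using card_hanging_le[of j] by (auto elim!: cop_clears_mono)
  qed
qed

lemma covered_from_start: "V - {xs ! 0} \<subseteq> beyond 0 \<union> hanging 0"
proof
  fix v assume v: "v \<in> V - {xs ! 0}"
  show "v \<in> beyond 0 \<union> hanging 0"
  proof (cases "v \<in> set xs")
    case True
    then obtain i where "i < length xs" "v = xs ! i" by (auto simp: in_set_conv_nth)
    then show ?thesis using v unfolding beyond_def by (cases i) auto
  next
    case False
    then obtain i where "i < length xs" "E v (xs ! i)" using off_spine_attached v by blast
    then show ?thesis
      using False v off_spine_leaves unfolding beyond_def hanging_def by (cases i) auto
  qed
qed

lemma cop_captures_by_spine: "cop_captures_by V E m (length xs * (2 * card V + 1))"
proof (rule cop_captures_by_if_cop_clears)
  show "xs ! 0 \<in> V" using spine_nonempty spine_vertex by simp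
  show "cop_clears V E (length xs * (2 * card V + 1)) (xs ! 0) (V - {xs ! 0})"
    using cop_clears_from[of 0] spine_nonempty covered_from_start
    by (auto elim: cop_clears_subset)
qed

end

context tree
begin

lemma caterpillar_has_spine:
  assumes "caterpillar V E"
  shows "\<exists>xs. spine V E xs"
proof (cases "V - leaves V E = {}")
  case True
  obtain u where "u \<in> V" using V_nonempty by blast
  then have "spine V E [u]" using True by unfold_locales auto
  then show ?thesis ..
next
  case False
  then obtain xs where xs: "distinct xs" "set xs = V - leaves V E"
    and edges: "\<forall>u\<in>V - leaves V E. \<forall>v\<in>V - leaves V E. E u v \<longleftrightarrow>
       (\<exists>i. Suc i < length xs \<and> (xs ! i = u \<and> xs ! Suc i = v \<or> xs ! i = v \<and> xs ! Suc i = u))"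
    using assms unfolding caterpillar_def induced_is_path_def by blast
  have "successively E xs"
    unfolding successively_conv_nth
  proof (intro allI impI)
    fix i assume i: "Suc i < length xs"
    then have "xs ! i \<in> V - leaves V E" "xs ! Suc i \<in> V - leaves V E"
      using xs(2) nth_mem by (metis Suc_lessD)+
    then show "E (xs ! i) (xs ! Suc i)" using edges i by blast
  qed
  then have "spine V E xs" using xs False by unfold_locales auto
  then show ?thesis ..
qed

end

theorem mainTheorem13:
  fixes V :: "'a set" and E :: "'a \<Rightarrow> 'a \<Rightarrow> bool"
  assumes "is_tree V E"
  shows "strong_cop_win V E \<longleftrightarrow> caterpillar V E"
proof -
  interpret tree V E by (rule tree.intro) (rule assms)
  have "(\<exists>B. \<forall>m. cop_captures_by V E m B) \<longleftrightarrow> caterpillar V E"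
  proof
    assume "\<exists>B. \<forall>m. cop_captures_by V E m B"
    then show "caterpillar V E" using not_cop_captures_by_if_not_caterpillar by blast
  next
    assume "caterpillar V E"
    then obtain xs where "spine V E xs" using caterpillar_has_spine by blast
    then show "\<exists>B. \<forall>m. cop_captures_by V E m B" using spine.cop_captures_by_spine by blast
  qed
  then show ?thesis by (simp add: strong_cop_win_iff_uniform_bound)
qed

end
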